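(* For $h\in[H]$, let $\mathcal D_h$ be an offline dataset as described, with current-state and next-state marginal densities $d^D_h$ and $d^{D,\dagger}_h$. For any function $w_h:\mathcal X\to[-C^{\mathbf x}_h,C^{\mathbf x}_h]$ and any pseudo-policy $\bar\pi$ with $\bar\pi_h(a\mid x)/\pi^D_h(a\mid x)\le C^{\mathbf a}_h$ for all $x\in\mathcal X,a\in\mathcal A$, we have $\big\|\mathbf P^{\bar\pi}_h(d^D_hw_h)/d^{D,\dagger}_h\big\|_\infty\le C^{\mathbf x}_hC^{\mathbf a}_h$.
   Context: Finite-horizon MDP with measurable state space $\mathcal X$, finite action space $\mathcal A$, $[H]=\{0,\dots,H-1\}$, transitions $P_h$. Offline data: $\mathcal D_h$ consists of tuples $(x_h,a_h,x_{h+1})$ generated by an arbitrary (possibly history-dependent) roll-in to $x_h$, then $a_h\sim\pi^D_h(\cdot\mid x_h)$ for a Markov single-step policy $\pi^D_h$, then $x_{h+1}\sim P_h(\cdot\mid x_h,a_h)$; $d^D_h$, $d^{D,\dagger}_h$ are the marginal densities of $x_h$ and $x_{h+1}$. $(\mathbf P^{\bar\pi}_hd)(x'):=\iint P_h(x'\mid x,a)\bar\pi_h(a\mid x)d(x)\mathrm dx\,\mathrm da$. A pseudo-policy is $\bar\pi_h=\min\{\pi_h,C\pi^D_h\}$ for a Markov policy $\pi$ and constant $C>0$. Ratios use the convention $0/0=0$. *)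

theory Defs
  imports "HOL-Analysis.Analysis"
begin

definition ratio :: "real \<Rightarrow> real \<Rightarrow> ereal" where
  "ratio a b = (if b = 0 then (if a = 0 then 0 else if a > 0 then \<infinity> else -\<infinity>)
               else ereal (a / b))"

definition markov_policy_step :: "'x measure \<Rightarrow> ('x \<Rightarrow> 'a::finite \<Rightarrow> real) \<Rightarrow> bool" where
  "markov_policy_step M p \<longleftrightarrow>
     (\<forall>x\<in>space M. (\<forall>a. p x a \<ge> 0) \<and> (\<Sum>a\<in>UNIV. p x a) = 1) \<and>
     (\<forall>a. (\<lambda>x. p x a) \<in> borel_measurable M)"

text \<open>Transition kernels P h x a x' (density of x' w.r.t. the base measure M).\<close>
definition transition_kernel :: "'x measure \<Rightarrow> ('x \<Rightarrow> 'a::finite \<Rightarrow> 'x \<Rightarrow> real) \<Rightarrow> bool" where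
  "transition_kernel M Ph \<longleftrightarrow>
     (\<forall>x\<in>space M. \<forall>a. \<forall>x'\<in>space M. Ph x a x' \<ge> 0) \<and>
     (\<forall>x\<in>space M. \<forall>a. (\<integral>\<^sup>+ x'. ennreal (Ph x a x') \<partial>M) = 1) \<and>
     (\<forall>a. \<forall>x'\<in>space M. (\<lambda>x. Ph x a x') \<in> borel_measurable M)"

definition density_fun :: "'x measure \<Rightarrow> ('x \<Rightarrow> real) \<Rightarrow> bool" where
  "density_fun M d \<longleftrightarrow> d \<in> borel_measurable M \<and> (\<forall>x\<in>space M. d x \<ge> 0)
     \<and> (\<integral>\<^sup>+ x. ennreal (d x) \<partial>M) = 1"

definition pseudo_policy :: "(nat \<Rightarrow> 'x \<Rightarrow> 'a \<Rightarrow> real) \<Rightarrow> real \<Rightarrow> (nat \<Rightarrow> 'x \<Rightarrow> 'a \<Rightarrow> real)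
    \<Rightarrow> nat \<Rightarrow> 'x \<Rightarrow> 'a \<Rightarrow> real" where
  "pseudo_policy \<pi> C \<pi>D h x a = min (\<pi> h x a) (C * \<pi>D h x a)"

definition Pop :: "'x measure \<Rightarrow> (nat \<Rightarrow> 'x \<Rightarrow> 'a::finite \<Rightarrow> 'x \<Rightarrow> real)
    \<Rightarrow> (nat \<Rightarrow> 'x \<Rightarrow> 'a \<Rightarrow> real) \<Rightarrow> nat \<Rightarrow> ('x \<Rightarrow> real) \<Rightarrow> 'x \<Rightarrow> real" where
  "Pop M P pb h d x' = (\<integral> x. (\<Sum>a\<in>UNIV. P h x a x' * pb h x a) * d x \<partial>M)"

end

theory Submission
  imports Defs
begin

text \<open>The ratio bound makes the pseudo-policy at most Ca h times the
  behaviour policy, so the integrand of the operator applied to dD h * w h at x' is bounded in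
  absolute value by Cx h * Ca h times the integrand of the next-state marginal at x'. Integrating
  bounds the numerator by Cx h * Ca h times the marginal; where the marginal vanishes, so does
  the numerator, and the ratio is 0 by convention.\<close>

lemma le_of_ratio_le_ereal:
  assumes "ratio p q \<le> ereal c" and "0 \<le> p" and "0 \<le> q"
  shows "p \<le> c * q"
proof (cases "q = 0")
  case True
  with assms show ?thesis by (auto simp: ratio_def split: if_splits)
next
  case False
  with assms have "p / q \<le> c" by (simp add: ratio_def)
  with False \<open>0 \<le> q\<close> show ?thesis by (simp add: divide_le_eq mult.commute)
qed

lemma abs_ratio_le_ereal:
  assumes "0 \<le> c" and "\<bar>a\<bar> \<le> c * max 0 b"
  shows "\<bar>ratio a b\<bar> \<le> ereal c"
proof (cases "b > 0")
  case True
  with assms have "\<bar>a / b\<bar> \<le> c" by (simp add: abs_divide divide_le_eq)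
  with True show ?thesis by (simp add: ratio_def)
next
  case False
  with assms show ?thesis by (simp add: ratio_def)
qed

lemma abs_integral_le_of_nn_integral_eq:
  fixes F G :: "'x \<Rightarrow> real"
  assumes [measurable]: "F \<in> borel_measurable M" "G \<in> borel_measurable M"
    and F_le_G: "\<And>x. x \<in> space M \<Longrightarrow> \<bar>F x\<bar> \<le> G x"
    and "(\<integral>\<^sup>+ x. ennreal (G x) \<partial>M) = ennreal d"
  shows "\<bar>\<integral>x. F x \<partial>M\<bar> \<le> max 0 d"
proof -
  have "(\<integral>\<^sup>+ x. ennreal (G x) \<partial>M) = ennreal (max 0 d)"
    using assms(4) by (simp only: ennreal_max_0)
  moreover have "AE x in M. 0 \<le> G x"
    using F_le_G by (auto intro!: AE_I2 order_trans[OF abs_ge_zero])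
  ultimately have G_int: "integrable M G" and G_val: "(\<integral>x. G x \<partial>M) = max 0 d"
    using nn_integral_eq_integrable[of G M "max 0 d"] by auto
  have F_int: "integrable M F"
    using F_le_G by (intro Bochner_Integration.integrable_bound[OF G_int])
      (auto intro!: AE_I2 order_trans[OF _ abs_ge_self])
  have "\<bar>\<integral>x. F x \<partial>M\<bar> \<le> (\<integral>x. \<bar>F x\<bar> \<partial>M)"
    using integral_norm_bound[of M F] by simp
  also have "\<dots> \<le> (\<integral>x. G x \<partial>M)"
    using F_int G_int F_le_G by (intro integral_mono) auto
  finally show ?thesis using G_val by simp
qed

lemma markov_policy_step_ex_pos:
  assumes "markov_policy_step M p" and "x \<in> space M"
  shows "\<exists>a. 0 < p x a"
proof -
  have "(\<Sum>a\<in>UNIV. p x a) = 1" and "\<forall>a. 0 \<le> p x a"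
    using assms unfolding markov_policy_step_def by auto
  then show ?thesis by (metis sum.neutral order_less_le zero_neq_one)
qed

lemma ratio_bound_nonneg:
  assumes "markov_policy_step M q" and "x \<in> space M"
    and "\<And>a. 0 \<le> p a" and "\<And>a. ratio (p a) (q x a) \<le> ereal c"
  shows "0 \<le> c"
proof -
  obtain a where pos: "0 < q x a"
    using markov_policy_step_ex_pos[OF assms(1,2)] by blast
  then have "p a \<le> c * q x a"
    using assms(3,4) by (intro le_of_ratio_le_ereal) auto
  with assms(3)[of a] have "0 \<le> c * q x a" by linarith
  with pos show ?thesis by (simp add: zero_le_mult_iff)
qed

lemma pseudo_policy_nonneg:
  assumes "markov_policy_step M (\<pi> h)" and "markov_policy_step M (\<pi>D h)"
    and "0 < C" and "x \<in> space M"
  shows "0 \<le> pseudo_policy \<pi> C \<pi>D h x a"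
  using assms unfolding markov_policy_step_def pseudo_policy_def by auto

lemma pseudo_policy_measurable:
  assumes "markov_policy_step M (\<pi> h)" and "markov_policy_step M (\<pi>D h)"
  shows "(\<lambda>x. pseudo_policy \<pi> C \<pi>D h x a) \<in> borel_measurable M"
  using assms unfolding markov_policy_step_def pseudo_policy_def
  by (auto intro!: borel_measurable_min borel_measurable_times)

lemma abs_Pop_le_next_marginal:
  fixes P :: "nat \<Rightarrow> 'x \<Rightarrow> 'a::finite \<Rightarrow> 'x \<Rightarrow> real"
  assumes kernel: "transition_kernel M (P h)" and behaviour: "markov_policy_step M (\<pi>D h)"
    and x': "x' \<in> space M"
    and pb_meas: "\<And>a. (\<lambda>x. pb h x a) \<in> borel_measurable M"
    and pb_nonneg: "\<And>x a. x \<in> space M \<Longrightarrow> 0 \<le> pb h x a"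
    and pb_le: "\<And>x a. x \<in> space M \<Longrightarrow> pb h x a \<le> c * \<pi>D h x a"
    and density: "density_fun M d"
    and marginal: "ennreal n = (\<integral>\<^sup>+ x. ennreal ((\<Sum>a\<in>UNIV. P h x a x' * \<pi>D h x a) * d x) \<partial>M)"
    and u_meas: "u \<in> borel_measurable M"
    and u_le: "\<And>x. x \<in> space M \<Longrightarrow> \<bar>u x\<bar> \<le> b"
    and "0 \<le> b" and "0 \<le> c"
  shows "\<bar>Pop M P pb h (\<lambda>x. d x * u x) x'\<bar> \<le> b * c * max 0 n"
proof -
  define f where "f x = (\<Sum>a\<in>UNIV. P h x a x' * pb h x a)" for x
  define g where "g x = (\<Sum>a\<in>UNIV. P h x a x' * \<pi>D h x a)" for x
  have P_nonneg: "\<And>x a. x \<in> space M \<Longrightarrow> 0 \<le> P h x a x'"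
    and [measurable]: "\<And>a. (\<lambda>x. P h x a x') \<in> borel_measurable M"
    using kernel x' unfolding transition_kernel_def by auto
  have [measurable]: "\<And>a. (\<lambda>x. \<pi>D h x a) \<in> borel_measurable M"
    using behaviour unfolding markov_policy_step_def by auto
  have d_nonneg: "\<And>x. x \<in> space M \<Longrightarrow> 0 \<le> d x" and [measurable]: "d \<in> borel_measurable M"
    using density unfolding density_fun_def by auto
  note [measurable] = pb_meas u_meas
  have f_nonneg: "0 \<le> f x" if "x \<in> space M" for x
    unfolding f_def using that P_nonneg pb_nonneg by (simp add: sum_nonneg)
  have f_le: "f x \<le> c * g x" if x: "x \<in> space M" for x
  proof -
    have "f x \<le> (\<Sum>a\<in>UNIV. P h x a x' * (c * \<pi>D h x a))"
      unfolding f_def using P_nonneg[OF x] pb_le[OF x] by (intro sum_mono mult_left_mono) auto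
    also have "\<dots> = c * g x" unfolding g_def by (simp add: sum_distrib_left algebra_simps)
    finally show ?thesis .
  qed
  have pointwise: "\<bar>f x * (d x * u x)\<bar> \<le> b * c * (g x * d x)" if x: "x \<in> space M" for x
  proof -
    have "\<bar>f x * (d x * u x)\<bar> = f x * d x * \<bar>u x\<bar>"
      using f_nonneg[OF x] d_nonneg[OF x] by (simp add: abs_mult)
    also have "\<dots> \<le> (c * g x) * d x * b"
      using f_le[OF x] f_nonneg[OF x] d_nonneg[OF x] u_le[OF x]
      by (intro mult_mono) (auto intro: mult_nonneg_nonneg)
    finally show ?thesis by (simp add: algebra_simps)
  qed
  have bc_nonneg: "0 \<le> b * c" using \<open>0 \<le> b\<close> \<open>0 \<le> c\<close> by simp
  have [measurable]: "g \<in> borel_measurable M" unfolding g_def by measurable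
  have "(\<integral>\<^sup>+ x. ennreal (b * c * (g x * d x)) \<partial>M)
      = ennreal (b * c) * (\<integral>\<^sup>+ x. ennreal (g x * d x) \<partial>M)"
    unfolding ennreal_mult'[OF bc_nonneg] by (rule nn_integral_cmult) measurable
  also have "\<dots> = ennreal (b * c) * ennreal (max 0 n)"
    using marginal by (simp add: g_def ennreal_max_0)
  also have "\<dots> = ennreal (b * c * max 0 n)"
    using bc_nonneg by (simp add: ennreal_mult)
  finally have "\<bar>\<integral>x. f x * (d x * u x) \<partial>M\<bar> \<le> max 0 (b * c * max 0 n)"
    using pointwise by (intro abs_integral_le_of_nn_integral_eq) (auto simp: f_def g_def)
  then show ?thesis
    using \<open>0 \<le> b\<close> \<open>0 \<le> c\<close> by (simp add: Pop_def f_def)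
qed

theorem lemma10:
  fixes M :: "'x measure"
    and P :: "nat \<Rightarrow> 'x \<Rightarrow> 'a::finite \<Rightarrow> 'x \<Rightarrow> real"
    and \<pi>D \<pi> :: "nat \<Rightarrow> 'x \<Rightarrow> 'a \<Rightarrow> real"
    and dD dDdag :: "nat \<Rightarrow> 'x \<Rightarrow> real"
    and w :: "nat \<Rightarrow> 'x \<Rightarrow> real"
    and Cx Ca :: "nat \<Rightarrow> real"
    and C :: real and H h :: nat
  assumes "h < H"
    and kernel: "\<And>k. k < H \<Longrightarrow> transition_kernel M (P k)"
    and behav: "\<And>k. k < H \<Longrightarrow> markov_policy_step M (\<pi>D k)"
    and pol: "\<And>k. k < H \<Longrightarrow> markov_policy_step M (\<pi> k)"
    and dens: "\<And>k. k < H \<Longrightarrow> density_fun M (dD k)"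
    and next_marg: "\<And>k x'. k < H \<Longrightarrow> x' \<in> space M \<Longrightarrow>
          ennreal (dDdag k x') = (\<integral>\<^sup>+ x. ennreal ((\<Sum>a\<in>UNIV. P k x a x' * \<pi>D k x a) * dD k x) \<partial>M)"
    and "C > 0"
    and w_meas: "w h \<in> borel_measurable M"
    and w_range: "\<And>x. x \<in> space M \<Longrightarrow> w h x \<in> {- Cx h .. Cx h}"
    and ratio_bd: "\<And>x a. x \<in> space M \<Longrightarrow>
          ratio (pseudo_policy \<pi> C \<pi>D h x a) (\<pi>D h x a) \<le> ereal (Ca h)"
  shows "(SUP x'\<in>space M. \<bar>ratio (Pop M P (pseudo_policy \<pi> C \<pi>D) h (\<lambda>x. dD h x * w h x) x')
                                (dDdag h x')\<bar>) \<le> ereal (Cx h * Ca h)"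
proof (rule SUP_least)
  fix x' assume x': "x' \<in> space M"
  have \<pi>D_step: "markov_policy_step M (\<pi>D h)" and \<pi>_step: "markov_policy_step M (\<pi> h)"
    using behav pol \<open>h < H\<close> by auto
  have pb_nonneg: "\<And>x a. x \<in> space M \<Longrightarrow> 0 \<le> pseudo_policy \<pi> C \<pi>D h x a"
    using pseudo_policy_nonneg[where \<pi> = \<pi> and \<pi>D = \<pi>D] \<pi>_step \<pi>D_step \<open>C > 0\<close> by blast
  have pb_le: "\<And>x a. x \<in> space M \<Longrightarrow> pseudo_policy \<pi> C \<pi>D h x a \<le> Ca h * \<pi>D h x a"
    using \<pi>D_step pb_nonneg ratio_bd unfolding markov_policy_step_def
    by (intro le_of_ratio_le_ereal) auto
  have Ca_nonneg: "0 \<le> Ca h"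
    using ratio_bound_nonneg[OF \<pi>D_step x'] pb_nonneg[OF x'] ratio_bd[OF x'] by blast
  have w_abs_le: "\<And>x. x \<in> space M \<Longrightarrow> \<bar>w h x\<bar> \<le> Cx h"
    using w_range by (fastforce simp: abs_le_iff)
  with x' have Cx_nonneg: "0 \<le> Cx h"
    by force
  have "\<bar>Pop M P (pseudo_policy \<pi> C \<pi>D) h (\<lambda>x. dD h x * w h x) x'\<bar>
      \<le> Cx h * Ca h * max 0 (dDdag h x')"
    using pseudo_policy_measurable[where \<pi> = \<pi> and \<pi>D = \<pi>D] \<pi>_step \<pi>D_step pb_nonneg pb_le
      kernel dens next_marg w_meas w_abs_le Ca_nonneg Cx_nonneg \<open>h < H\<close> x'
    by (intro abs_Pop_le_next_marginal[where \<pi>D = \<pi>D]) auto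
  then show "\<bar>ratio (Pop M P (pseudo_policy \<pi> C \<pi>D) h (\<lambda>x. dD h x * w h x) x') (dDdag h x')\<bar>
      \<le> ereal (Cx h * Ca h)"
    using Ca_nonneg Cx_nonneg by (intro abs_ratio_le_ereal) auto
qed

end
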